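(* Suppose Assumptions 1 and 2 hold and the inverse demand function $p$ is convex. If $\mathbf{x}$ is a Cournot candidate with $X=\sum_{n=1}^N x_n>0$, then $p$ is differentiable at $X$, i.e., $\partial_-p(X)=\partial_+p(X)$.
   Context: Cournot model: $N$ suppliers, inverse demand $p:[0,\infty)\to[0,\infty)$, supplier $n$ has cost $C_n:[0,\infty)\to[0,\infty)$ and chooses $x_n\ge0$; $X=\sum_n x_n$. $\partial_\pm$ denote right/left derivatives; $C_n'(0)$ is the right derivative at $0$. Assumption 1: each $C_n$ is convex, continuous, nondecreasing on $[0,\infty)$, continuously differentiable on $(0,\infty)$, with $C_n(0)=0$. Assumption 2: $p$ is continuous, nonnegative, nonincreasing, $p(0)>0$; its right derivative at $0$ exists and at every $q>0$ its left and right derivatives exist. A nonnegative vector $\mathbf{x}$ is a Cournot candidate if for every $n$: $C_n'(x_n)\le p(X)+x_n\,\partial_-p(X)$ whenever $x_n>0$, and $C_n'(x_n)\ge p(X)+x_n\,\partial_+p(X)$. *)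

theory Defs
  imports "HOL-Analysis.Analysis"
begin

definition right_deriv :: "(real \<Rightarrow> real) \<Rightarrow> real \<Rightarrow> real \<Rightarrow> bool" where
  "right_deriv f x D \<longleftrightarrow> (f has_real_derivative D) (at x within {x..})"

definition left_deriv :: "(real \<Rightarrow> real) \<Rightarrow> real \<Rightarrow> real \<Rightarrow> bool" where
  "left_deriv f x D \<longleftrightarrow> (f has_real_derivative D) (at x within {..x})"

definition cost_ok :: "(real \<Rightarrow> real) \<Rightarrow> (real \<Rightarrow> real) \<Rightarrow> bool" where
  "cost_ok C C' \<longleftrightarrow>
     convex_on {0..} C \<and> continuous_on {0..} C \<and> mono_on {0..} C \<and> C 0 = 0 \<and>
     (\<forall>x\<ge>0. C x \<ge> 0) \<and>
     (\<forall>x>0. (C has_real_derivative C' x) (at x)) \<and> continuous_on {0<..} C' \<and>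
     right_deriv C 0 (C' 0)"

definition demand_ok :: "(real \<Rightarrow> real) \<Rightarrow> (real \<Rightarrow> real) \<Rightarrow> (real \<Rightarrow> real) \<Rightarrow> bool" where
  "demand_ok p dp_plus dp_minus \<longleftrightarrow>
     continuous_on {0..} p \<and> (\<forall>q\<ge>0. p q \<ge> 0) \<and> antimono_on {0..} p \<and> p 0 > 0 \<and>
     right_deriv p 0 (dp_plus 0) \<and>
     (\<forall>q>0. right_deriv p q (dp_plus q) \<and> left_deriv p q (dp_minus q))"

definition cournot_candidate ::
  "nat \<Rightarrow> (real \<Rightarrow> real) \<Rightarrow> (real \<Rightarrow> real) \<Rightarrow> (real \<Rightarrow> real) \<Rightarrow> (nat \<Rightarrow> real \<Rightarrow> real) \<Rightarrow> (nat \<Rightarrow> real) \<Rightarrow> bool" where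
  "cournot_candidate N p dp_plus dp_minus C' x \<longleftrightarrow>
     (\<forall>n<N. x n \<ge> 0) \<and>
     (let X = (\<Sum>n<N. x n) in
       \<forall>n<N. (x n > 0 \<longrightarrow> C' n (x n) \<le> p X + x n * dp_minus X) \<and>
              C' n (x n) \<ge> p X + x n * dp_plus X)"

end

theory Submission
  imports Defs
begin

(*
  At an equilibrium candidate with positive total output X, some
  supplier n produces x_n > 0, so both first-order conditions apply to it:
    p(X) + x_n dp_plus(X)  \<le>  C_n'(x_n)  \<le>  p(X) + x_n dp_minus(X).
  Dividing by x_n > 0 gives dp_plus(X) \<le> dp_minus(X); this uses no convexity.
  Conversely, for any convex function the left derivative at an interior point
  is at most the right derivative, because difference quotients of a convex
  function increase: every left quotient is below every right quotient, and the
  inequality survives the two one-sided limits.  Together the two inequalities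
  force dp_minus(X) = dp_plus(X).
*)

lemma convex_on_slope_across:
  fixes f :: "real \<Rightarrow> real"
  assumes cvx: "convex_on I f" and I: "y \<in> I" "z \<in> I" and t: "y < t" "t < z"
  shows "(f y - f t) / (y - t) \<le> (f t - f z) / (t - z)"
  using convex_on_slope_le[OF cvx I t] by linarith

lemma convex_on_left_deriv_le_right_deriv:
  fixes f :: "real \<Rightarrow> real"
  assumes cvx: "convex_on {a<..<b} f" and t: "a < t" "t < b"
    and L: "left_deriv f t Dm" and R: "right_deriv f t Dp"
  shows "Dm \<le> Dp"
proof -
  let ?slope = "\<lambda>y. (f y - f t) / (y - t)"
  have left_lim: "(?slope \<longlongrightarrow> Dm) (at_left t)"
    using L unfolding left_deriv_def has_field_derivative_iff
    by (rule tendsto_within_subset) auto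
  have right_lim: "(?slope \<longlongrightarrow> Dp) (at_right t)"
    using R unfolding right_deriv_def has_field_derivative_iff
    by (rule tendsto_within_subset) auto
  have Dm_le_slope: "Dm \<le> ?slope z" if z: "t < z" "z < b" for z
  proof (rule tendsto_le[OF trivial_limit_at_left_real tendsto_const left_lim])
    have "eventually (\<lambda>y. y \<in> {a<..<t}) (at_left t)"
      using eventually_at_left_real[OF t(1)] by simp
    then show "eventually (\<lambda>y. ?slope y \<le> ?slope z) (at_left t)"
    proof eventually_elim
      case (elim y)
      then have "?slope y \<le> (f t - f z) / (t - z)"
        using convex_on_slope_across[OF cvx, of y z t] z t by (auto simp: minus_divide_eq_eq)
      also have "\<dots> = ?slope z"
        by (simp add: divide_simps algebra_simps)
      finally show ?case .
    qed
  qed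
  show ?thesis
  proof (rule tendsto_le[OF trivial_limit_at_right_real right_lim tendsto_const])
    show "eventually (\<lambda>z. Dm \<le> ?slope z) (at_right t)"
      using eventually_at_right_real[OF t(2)] by eventually_elim (auto intro: Dm_le_slope)
  qed
qed

text \<open>At a Cournot candidate with positive total output, the right derivative of
  the inverse demand is at most its left derivative: the two first-order conditions
  of any supplier with positive output sandwich its marginal cost.\<close>
lemma cournot_candidate_right_deriv_le_left_deriv:
  assumes cand: "cournot_candidate N p dp_plus dp_minus C' x"
    and Xpos: "(\<Sum>n<N. x n) > 0"
  shows "dp_plus (\<Sum>n<N. x n) \<le> dp_minus (\<Sum>n<N. x n)"
proof -
  define X where "X = (\<Sum>n<N. x n)"
  obtain n where n: "n < N" "x n > 0"
  proof (rule ccontr)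
    assume "\<not> thesis"
    with that have "\<forall>n<N. x n \<le> 0" by force
    then have "X \<le> 0" unfolding X_def by (intro sum_nonpos) auto
    with Xpos X_def show False by simp
  qed
  have "p X + x n * dp_plus X \<le> C' n (x n)" "C' n (x n) \<le> p X + x n * dp_minus X"
    using cand n unfolding cournot_candidate_def X_def Let_def by auto
  then have "x n * dp_plus X \<le> x n * dp_minus X" by simp
  with n(2) show ?thesis unfolding X_def by simp
qed

theorem proposition3:
  fixes N :: nat and p dp_plus dp_minus :: "real \<Rightarrow> real"
    and C C' :: "nat \<Rightarrow> real \<Rightarrow> real" and x :: "nat \<Rightarrow> real"
  assumes A1: "\<forall>n<N. cost_ok (C n) (C' n)"
    and A2: "demand_ok p dp_plus dp_minus"
    and cvx: "convex_on {0..} p"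
    and cand: "cournot_candidate N p dp_plus dp_minus C' x"
    and Xpos: "(\<Sum>n<N. x n) > 0"
  shows "dp_minus (\<Sum>n<N. x n) = dp_plus (\<Sum>n<N. x n)"
proof -
  define X where "X = (\<Sum>n<N. x n)"
  have "X > 0" using Xpos X_def by simp
  have "convex_on {0<..<X + 1} p"
    using cvx by (rule convex_on_subset) auto
  moreover have "left_deriv p X (dp_minus X)" "right_deriv p X (dp_plus X)"
    using A2 \<open>X > 0\<close> unfolding demand_ok_def by auto
  ultimately have "dp_minus X \<le> dp_plus X"
    using \<open>X > 0\<close> by (intro convex_on_left_deriv_le_right_deriv) auto
  moreover have "dp_plus X \<le> dp_minus X"
    using cournot_candidate_right_deriv_le_left_deriv[OF cand Xpos] X_def by simp
  ultimately show ?thesis unfolding X_def by simp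
qed

end
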